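(* Let $(N,C,\mathbf{A},k)$ be an instance with $|N|=n$ having at least one cohesive group, and let $c_{\max}$ be its maximum EJR degree. If $n>k(k+1)^2(c_{\max}-1)$, then every committee output by $\frac{n}{k(k+1)}$-LS-PAV (i.e., $\lambda$-LS-PAV with $\lambda=\frac{n}{k(k+1)}$, from any initial committee) has EJR degree $c_{\max}$.
   Context: An instance consists of voters $N=\{1,\dots,n\}$, candidates $C$, approval ballots $A_i\subseteq C$ for $i\in N$, and a committee size $k$ with $1\le k\le|C|$. For $\ell\in\mathbb{N}$, $N'\subseteq N$ is an $\ell$-cohesive group if $|N'|\ge\ell n/k$ and $|\bigcap_{i\in N'}A_i|\ge\ell$ (a cohesive group is a $1$-cohesive group). A size-$k$ committee $W$ achieves EJR degree $c$ if for every $\ell\in\{1,\dots,k\}$ every $\ell$-cohesive group contains at least $c$ voters $i$ with $|A_i\cap W|\ge\ell$; its EJR degree is the largest such $c$, and the maximum EJR degree of the instance is the maximum over all size-$k$ committees. The PAV-score of $W$ is $s_{\mathrm{PAV}}(W)=\sum_{i=1}^n\sum_{j=1}^{|A_i\cap W|}\frac1j$, and $\Delta(W,c^+,c^-)=s_{\mathrm{PAV}}((W\setminus\{c^-\})\cup\{c^+\})-s_{\mathrm{PAV}}(W)$. The algorithm $\lambda$-LS-PAV starts from an arbitrary size-$k$ committee $W$ and, while there exist $c^+\notin W$ and $c^-\in W$ with $\Delta(W,c^+,c^-)\ge\lambda$, replaces $W$ by $(W\setminus\{c^-\})\cup\{c^+\}$; it then outputs $W$. *)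

theory Defs
  imports Complex_Main
begin

text \<open>Voters are N = {1..n}; candidates form a finite set C; ballots A i are subsets of C.\<close>

definition cohesive_group ::
  "nat \<Rightarrow> 'c set \<Rightarrow> (nat \<Rightarrow> 'c set) \<Rightarrow> nat \<Rightarrow> nat \<Rightarrow> nat set \<Rightarrow> bool" where
  "cohesive_group n C A k l N' \<longleftrightarrow>
     N' \<subseteq> {1..n} \<and> real (card N') \<ge> real l * real n / real k \<and>
     card (C \<inter> (\<Inter>i\<in>N'. A i)) \<ge> l"

definition is_committee :: "'c set \<Rightarrow> nat \<Rightarrow> 'c set \<Rightarrow> bool" where
  "is_committee C k W \<longleftrightarrow> W \<subseteq> C \<and> card W = k"

definition achieves_ejr_degree ::
  "nat \<Rightarrow> 'c set \<Rightarrow> (nat \<Rightarrow> 'c set) \<Rightarrow> nat \<Rightarrow> 'c set \<Rightarrow> nat \<Rightarrow> bool" where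
  "achieves_ejr_degree n C A k W c \<longleftrightarrow>
     (\<forall>l\<in>{1..k}. \<forall>N'. cohesive_group n C A k l N' \<longrightarrow>
        card {i\<in>N'. card (A i \<inter> W) \<ge> l} \<ge> c)"

definition ejr_degree ::
  "nat \<Rightarrow> 'c set \<Rightarrow> (nat \<Rightarrow> 'c set) \<Rightarrow> nat \<Rightarrow> 'c set \<Rightarrow> nat" where
  "ejr_degree n C A k W = (GREATEST c. achieves_ejr_degree n C A k W c)"

definition max_ejr_degree ::
  "nat \<Rightarrow> 'c set \<Rightarrow> (nat \<Rightarrow> 'c set) \<Rightarrow> nat \<Rightarrow> nat" where
  "max_ejr_degree n C A k = Max {ejr_degree n C A k W | W. is_committee C k W}"

definition pav_score :: "nat \<Rightarrow> (nat \<Rightarrow> 'c set) \<Rightarrow> 'c set \<Rightarrow> real" where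
  "pav_score n A W = (\<Sum>i\<in>{1..n}. \<Sum>j\<in>{1..card (A i \<inter> W)}. 1 / real j)"

definition pav_delta :: "nat \<Rightarrow> (nat \<Rightarrow> 'c set) \<Rightarrow> 'c set \<Rightarrow> 'c \<Rightarrow> 'c \<Rightarrow> real" where
  "pav_delta n A W cp cm = pav_score n A ((W - {cm}) \<union> {cp}) - pav_score n A W"

definition ls_pav_step ::
  "real \<Rightarrow> nat \<Rightarrow> 'c set \<Rightarrow> (nat \<Rightarrow> 'c set) \<Rightarrow> 'c set \<Rightarrow> 'c set \<Rightarrow> bool" where
  "ls_pav_step lam n C A W W' \<longleftrightarrow>
     (\<exists>cp cm. cp \<in> C - W \<and> cm \<in> W \<and> pav_delta n A W cp cm \<ge> lam \<and>
              W' = (W - {cm}) \<union> {cp})"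

definition ls_pav_output ::
  "real \<Rightarrow> nat \<Rightarrow> 'c set \<Rightarrow> (nat \<Rightarrow> 'c set) \<Rightarrow> nat \<Rightarrow> 'c set \<Rightarrow> bool" where
  "ls_pav_output lam n C A k W \<longleftrightarrow>
     (\<exists>W0. is_committee C k W0 \<and> (ls_pav_step lam n C A)\<^sup>*\<^sup>* W0 W) \<and>
     \<not> (\<exists>W'. ls_pav_step lam n C A W W')"

end

theory Submission
  imports Defs "HOL-Analysis.Harmonic_Numbers"
begin

text \<open>
  Let W be an output of LS-PAV with threshold \<lambda> = n/(k(k+1)), so that no swap gains \<lambda>.
  Suppose some l-cohesive group N' had fewer than c members with l approved winners.
  Then the set U of its other members has |U| \<ge> ln/k - (c - 1), and some candidate p
  approved by all of N' is not in W. Adding p and removing each w \<in> W in turn, the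
  harmonic weights of PAV give a total gain of at least |U|(k+1)/l - n, while local
  optimality bounds this total by k\<lambda> = n/(k+1). For c = c_max the two bounds are
  incompatible with n > k(k+1)^2(c_max - 1), so W achieves EJR degree c_max, and by
  definition of c_max no committee achieves more.
\<close>

lemma pav_score_eq_sum_harm: "pav_score n A W = (\<Sum>i\<in>{1..n}. harm (card (A i \<inter> W)))"
  unfolding pav_score_def harm_def by (simp add: divide_inverse)

lemma card_Int_swap:
  assumes "finite X" "cm \<in> W" "cp \<notin> W"
  shows "card (X \<inter> (W - {cm} \<union> {cp})) + (if cm \<in> X then 1 else 0)
       = card (X \<inter> W) + (if cp \<in> X then 1 else 0)"
proof -
  have "X \<inter> (W - {cm} \<union> {cp}) \<union> (X \<inter> {cm}) = X \<inter> W \<union> (X \<inter> {cp})"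
    using assms(2) by auto
  moreover have "card (X \<inter> (W - {cm} \<union> {cp}) \<union> (X \<inter> {cm}))
      = card (X \<inter> (W - {cm} \<union> {cp})) + card (X \<inter> {cm})"
    using assms by (intro card_Un_disjoint) auto
  moreover have "card (X \<inter> W \<union> (X \<inter> {cp})) = card (X \<inter> W) + card (X \<inter> {cp})"
    using assms by (intro card_Un_disjoint) auto
  ultimately have "card (X \<inter> (W - {cm} \<union> {cp})) + card (X \<inter> {cm})
      = card (X \<inter> W) + card (X \<inter> {cp})"
    by metis
  moreover have "card (X \<inter> {a}) = (if a \<in> X then 1 else 0)" for a
    by (cases "a \<in> X") auto
  ultimately show ?thesis by simp
qed

text \<open>With u = card (X \<inter> W): if cp \<in> X, each swap removing one of the card W - u
  candidates outside X gains 1/(u+1); otherwise each swap removing one of the u candidates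
  in X loses 1/u.\<close>
lemma sum_harm_swap_ge:
  fixes X W :: "'c set"
  assumes X: "finite X" and W: "finite W" and cp: "cp \<notin> W"
  shows "(\<Sum>cm\<in>W. harm (card (X \<inter> (W - {cm} \<union> {cp}))) - harm (card (X \<inter> W)) :: real)
     \<ge> (if cp \<in> X then (real (card W) + 1) / (real (card (X \<inter> W)) + 1) else 0) - 1"
proof -
  define u where "u = card (X \<inter> W)"
  define g :: "'c \<Rightarrow> real"
    where "g cm = harm (card (X \<inter> (W - {cm} \<union> {cp}))) - harm u" for cm
  have card_swap: "card (X \<inter> (W - {cm} \<union> {cp})) + (if cm \<in> X then 1 else 0)
      = u + (if cp \<in> X then 1 else 0)" if "cm \<in> W" for cm
    unfolding u_def using card_Int_swap[OF X that cp] .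
  have split: "sum g W = sum g (W \<inter> X) + sum g (W - X)"
    using W by (rule sum.Int_Diff)
  have card_W: "card W = u + card (W - X)"
    unfolding u_def using W by (metis Int_commute card_Int_Diff)
  show ?thesis
  proof (cases "cp \<in> X")
    case True
    have "g cm = 0" if "cm \<in> W \<inter> X" for cm
      using card_swap[of cm] that True by (simp add: g_def)
    moreover have "g cm = 1 / (real u + 1)" if "cm \<in> W - X" for cm
      using card_swap[of cm] that True by (simp add: g_def harm_Suc divide_inverse add.commute)
    ultimately have "sum g W = real (card (W - X)) / (real u + 1)"
      using split by simp
    also have "\<dots> = (real (card W) + 1) / (real u + 1) - 1"
      using card_W by (simp add: field_simps)
    finally show ?thesis using True by (simp add: g_def u_def)
  next
    case False
    have "g cm = - 1 / real u" if "cm \<in> W \<inter> X" for cm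
    proof -
      have "u = Suc (card (X \<inter> (W - {cm} \<union> {cp})))"
        using card_swap[of cm] that False by simp
      then show ?thesis by (simp add: g_def harm_Suc divide_inverse)
    qed
    moreover have "g cm = 0" if "cm \<in> W - X" for cm
      using card_swap[of cm] that False by (simp add: g_def)
    moreover have "card (W \<inter> X) = u"
      by (simp add: u_def Int_commute)
    ultimately have "sum g W = real u * (- 1 / real u)"
      using split by simp
    also have "\<dots> \<ge> -1" by (cases "u = 0") auto
    finally show ?thesis using False by (simp add: g_def u_def)
  qed
qed

lemma sum_pav_delta_ge:
  assumes "finite C" "\<And>i. i \<in> {1..n} \<Longrightarrow> A i \<subseteq> C" "W \<subseteq> C" "cp \<notin> W"
  shows "(\<Sum>cm\<in>W. pav_delta n A W cp cm) \<ge>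
    (\<Sum>i\<in>{1..n}. if cp \<in> A i then (real (card W) + 1) / (real (card (A i \<inter> W)) + 1) else 0)
    - real n"
proof -
  have "(\<Sum>cm\<in>W. pav_delta n A W cp cm) =
     (\<Sum>i\<in>{1..n}. \<Sum>cm\<in>W. harm (card (A i \<inter> (W - {cm} \<union> {cp}))) - harm (card (A i \<inter> W)))"
    unfolding pav_delta_def pav_score_eq_sum_harm sum_subtractf[symmetric]
    by (rule sum.swap)
  also have "\<dots> \<ge> (\<Sum>i\<in>{1..n}.
      (if cp \<in> A i then (real (card W) + 1) / (real (card (A i \<inter> W)) + 1) else 0) - 1)"
  proof (rule sum_mono, rule sum_harm_swap_ge)
    fix i assume "i \<in> {1..n}"
    then show "finite (A i)" using assms(1,2) finite_subset by blast
  qed (use assms finite_subset in auto)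
  finally show ?thesis by (simp add: sum_subtractf)
qed

lemma ls_pav_steps_preserve_committee:
  assumes "(ls_pav_step lam n C A)\<^sup>*\<^sup>* W0 W" "is_committee C k W0" "finite C"
  shows "is_committee C k W"
  using assms(1,2)
proof (induction rule: rtranclp_induct)
  case (step W W')
  then obtain cp cm where swap: "cp \<in> C - W" "cm \<in> W" "W' = W - {cm} \<union> {cp}"
    unfolding ls_pav_step_def by blast
  have "W \<subseteq> C" "card W = k" "finite W"
    using step assms(3) finite_subset unfolding is_committee_def by auto
  moreover have "card W > 0"
    using swap(2) \<open>finite W\<close> card_gt_0_iff by blast
  ultimately show ?case
    using swap unfolding is_committee_def by (auto simp: card_insert_if)
qed

lemma ls_pav_output_swap_stable:
  assumes "ls_pav_output lam n C A k W" "finite C"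
  shows "is_committee C k W"
    and "\<And>cp cm. cp \<in> C - W \<Longrightarrow> cm \<in> W \<Longrightarrow> pav_delta n A W cp cm < lam"
proof -
  show "is_committee C k W"
    using assms ls_pav_steps_preserve_committee unfolding ls_pav_output_def by blast
  fix cp cm assume "cp \<in> C - W" "cm \<in> W"
  then have "pav_delta n A W cp cm \<ge> lam \<Longrightarrow> ls_pav_step lam n C A W (W - {cm} \<union> {cp})"
    unfolding ls_pav_step_def by blast
  then show "pav_delta n A W cp cm < lam"
    using assms(1) unfolding ls_pav_output_def by force
qed

lemma card_unsatisfied_lt_if_swap_stable:
  assumes C: "finite C" and A: "\<And>i. i \<in> {1..n} \<Longrightarrow> A i \<subseteq> C"
    and W: "is_committee C k W" and k: "1 \<le> k"
    and stable: "\<And>cp cm. cp \<in> C - W \<Longrightarrow> cm \<in> W \<Longrightarrow> pav_delta n A W cp cm < lam"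
    and N': "N' \<subseteq> {1..n}" and common: "l \<le> card (C \<inter> (\<Inter>i\<in>N'. A i))"
    and i0: "i0 \<in> N'" "card (A i0 \<inter> W) < l"
  shows "real (card {i\<in>N'. card (A i \<inter> W) < l}) * (real k + 1) < real l * (real n + real k * lam)"
proof -
  define U where "U = {i\<in>N'. card (A i \<inter> W) < l}"
  have WC: "W \<subseteq> C" and card_W: "card W = k" and "finite W"
    using W C finite_subset unfolding is_committee_def by auto
  have l: "real l > 0" using i0 by simp
  obtain cp where cp: "cp \<in> C - W" "\<And>i. i \<in> N' \<Longrightarrow> cp \<in> A i"
  proof -
    have "finite (A i0)" using A i0(1) N' C finite_subset by blast
    then have "\<not> C \<inter> (\<Inter>i\<in>N'. A i) \<subseteq> A i0 \<inter> W"
      using common i0(2) card_mono[of "A i0 \<inter> W"] by (meson finite_Int le_trans not_le)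
    then show ?thesis using that i0(1) by blast
  qed
  define f where "f i = (if cp \<in> A i then (real k + 1) / (real (card (A i \<inter> W)) + 1) else 0)" for i
  have "real (card U) * ((real k + 1) / real l) - real n = (\<Sum>i\<in>U. (real k + 1) / real l) - real n"
    by simp
  also have "\<dots> \<le> sum f U - real n"
  proof (rule diff_right_mono, rule sum_mono)
    fix i assume "i \<in> U"
    then have "cp \<in> A i" "real (card (A i \<inter> W)) + 1 \<le> real l"
      using cp(2) unfolding U_def by auto
    then show "(real k + 1) / real l \<le> f i"
      unfolding f_def by (simp add: divide_left_mono)
  qed
  also have "\<dots> \<le> sum f {1..n} - real n"
    using N' by (intro diff_right_mono sum_mono2) (auto simp: U_def f_def)
  also have "\<dots> \<le> (\<Sum>cm\<in>W. pav_delta n A W cp cm)"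
    using sum_pav_delta_ge[of C n A W cp] C A WC cp(1) unfolding f_def card_W by simp
  also have "\<dots> < (\<Sum>cm\<in>W. lam)"
    using \<open>finite W\<close> card_W k stable cp(1) by (intro sum_strict_mono) auto
  also have "\<dots> = real k * lam"
    using card_W by simp
  finally have "real (card U) * ((real k + 1) / real l) < real n + real k * lam"
    by linarith
  then show ?thesis
    using l unfolding U_def by (simp add: field_simps)
qed

lemma cohesive_share_exceeds_swap_bound:
  fixes k l n c x :: real
  assumes k: "k \<ge> 1" and l: "l \<ge> 1" and n: "n \<ge> 0"
    and large: "n > k * (k + 1)^2 * (c - 1)" and x: "x \<ge> l * n / k - (c - 1)"
  shows "l * (n + k * (n / (k * (k + 1)))) < x * (k + 1)"
proof -
  have "k * (l * n * (k + 2)) = l * n * (k + 1)^2 - l * n"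
    by (simp add: algebra_simps power2_eq_square)
  also have "\<dots> \<le> l * n * (k + 1)^2 - n"
    using l n mult_right_mono[of 1 l n] by simp
  also have "\<dots> < l * n * (k + 1)^2 - k * (k + 1)^2 * (c - 1)"
    using large by simp
  also have "\<dots> = k * (k + 1)^2 * (l * n / k - (c - 1))"
    using k by (simp add: field_simps)
  also have "\<dots> \<le> k * (k + 1)^2 * x"
    using x k by (intro mult_left_mono) auto
  finally have "l * n * (k + 2) < (k + 1)^2 * x"
    using k by (simp add: mult.commute mult.left_commute)
  have "l * (n + k * (n / (k * (k + 1)))) = l * (n + n / (k + 1))"
    using k by simp
  also have "\<dots> = l * n * (k + 2) / (k + 1)"
    using k by (simp add: field_simps)
  also have "\<dots> < (k + 1)^2 * x / (k + 1)"
    using \<open>l * n * (k + 2) < (k + 1)^2 * x\<close> k by (simp add: divide_strict_right_mono)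
  also have "\<dots> = x * (k + 1)"
    using k by (simp add: power2_eq_square)
  finally show ?thesis .
qed

lemma swap_stable_achieves_ejr_degree:
  fixes c :: nat
  assumes C: "finite C" and A: "\<And>i. i \<in> {1..n} \<Longrightarrow> A i \<subseteq> C"
    and W: "is_committee C k W" and k: "1 \<le> k"
    and stable: "\<And>cp cm. cp \<in> C - W \<Longrightarrow> cm \<in> W \<Longrightarrow>
      pav_delta n A W cp cm < real n / (real k * (real k + 1))"
    and large: "real n > real k * (real k + 1)^2 * (real c - 1)"
  shows "achieves_ejr_degree n C A k W c"
  unfolding achieves_ejr_degree_def
proof (intro ballI allI impI)
  fix l N' assume l: "l \<in> {1..k}" and cohesive: "cohesive_group n C A k l N'"
  define S where "S = {i\<in>N'. l \<le> card (A i \<inter> W)}"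
  define U where "U = {i\<in>N'. card (A i \<inter> W) < l}"
  have N': "N' \<subseteq> {1..n}" and card_N': "real (card N') \<ge> real l * real n / real k"
    and common: "l \<le> card (C \<inter> (\<Inter>i\<in>N'. A i))"
    using cohesive unfolding cohesive_group_def by auto
  have "finite N'"
    using N' finite_subset by blast
  then have "card N' = card S + card U"
    unfolding S_def U_def
    by (subst card_Un_disjoint[symmetric]) (auto intro: arg_cong[where f = card])
  show "c \<le> card S"
  proof (rule ccontr)
    assume "\<not> c \<le> card S"
    with \<open>card N' = card S + card U\<close> card_N'
    have "real (card U) \<ge> real l * real n / real k - (real c - 1)"
      by simp
    then have U_large: "real l * (real n + real k * (real n / (real k * (real k + 1))))
        < real (card U) * (real k + 1)"
      using k l large by (intro cohesive_share_exceeds_swap_bound) auto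
    moreover have "0 \<le> real l * (real n + real k * (real n / (real k * (real k + 1))))"
      by simp
    ultimately have "real (card U) * (real k + 1) > 0"
      by linarith
    then have "U \<noteq> {}"
      by auto
    then obtain i0 where "i0 \<in> U"
      by blast
    with U_large show False
      using card_unsatisfied_lt_if_swap_stable[OF C A W k stable N' common]
      unfolding U_def by fastforce
  qed
qed

lemma achieves_ejr_degree_le_ejr_degree:
  assumes "cohesive_group n C A k 1 N'" "1 \<le> k" "achieves_ejr_degree n C A k W c"
  shows "c \<le> ejr_degree n C A k W"
  unfolding ejr_degree_def
proof (rule Greatest_le_nat[where b = "card N'"])
  show "achieves_ejr_degree n C A k W c" by (rule assms(3))
  fix d assume "achieves_ejr_degree n C A k W d"
  then have "d \<le> card {i\<in>N'. 1 \<le> card (A i \<inter> W)}"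
    using assms(1,2) unfolding achieves_ejr_degree_def by auto
  also have "\<dots> \<le> card N'"
    using assms(1) finite_subset unfolding cohesive_group_def by (intro card_mono) auto
  finally show "d \<le> card N'" .
qed

lemma ejr_degree_le_max_ejr_degree:
  assumes "finite C" "is_committee C k W"
  shows "ejr_degree n C A k W \<le> max_ejr_degree n C A k"
proof -
  have "{ejr_degree n C A k W | W. is_committee C k W} \<subseteq> (\<lambda>W. ejr_degree n C A k W) ` Pow C"
    unfolding is_committee_def by auto
  then have "finite {ejr_degree n C A k W | W. is_committee C k W}"
    using assms(1) finite_subset by blast
  then show ?thesis
    unfolding max_ejr_degree_def using assms(2) by (intro Max_ge) auto
qed

theorem corollary2:
  fixes n k :: nat and C :: "'c set" and A :: "nat \<Rightarrow> 'c set" and W :: "'c set"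
  assumes "finite C"
    and "\<And>i. i \<in> {1..n} \<Longrightarrow> A i \<subseteq> C"
    and "1 \<le> k" and "k \<le> card C"
    and "\<exists>N'. cohesive_group n C A k 1 N'"
    and "real n > real k * (real k + 1)^2 * (real (max_ejr_degree n C A k) - 1)"
    and "ls_pav_output (real n / (real k * (real k + 1))) n C A k W"
  shows "ejr_degree n C A k W = max_ejr_degree n C A k"
proof (rule antisym)
  have W: "is_committee C k W"
    using ls_pav_output_swap_stable(1)[OF assms(7,1)] .
  show "ejr_degree n C A k W \<le> max_ejr_degree n C A k"
    using assms(1) W by (rule ejr_degree_le_max_ejr_degree)
  have "achieves_ejr_degree n C A k W (max_ejr_degree n C A k)"
    using swap_stable_achieves_ejr_degree[OF assms(1,2) W assms(3)
        ls_pav_output_swap_stable(2)[OF assms(7,1)] assms(6)] .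
  then show "max_ejr_degree n C A k \<le> ejr_degree n C A k W"
    using assms(5,3) achieves_ejr_degree_le_ejr_degree by blast
qed

end
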